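(* Let $n,w$ be integers with $w>3$ and $n>2w$, and let $b\in\{n-1,n,\dots,2n-1\}$. Then there is no equitable $2$-partition of the Johnson graph $J(n,w)$ with quotient matrix $$\begin{pmatrix} w(n-w)-b & b\\ 2n-2-b & w(n-w)-2n+2+b\end{pmatrix}.$$
   Context: The Johnson graph $J(n,w)$ has as vertices the binary vectors of length $n$ with exactly $w$ ones; two vertices are adjacent iff they have exactly $w-1$ common ones (i.e. they differ by swapping a $1$ and a $0$). It is regular of degree $w(n-w)$. A $2$-partition $(C_1,C_2)$ of the vertex set into two nonempty sets (cells) is equitable with quotient matrix $S=(s_{ij})_{i,j\in\{1,2\}}$ if every vertex of $C_i$ has exactly $s_{ij}$ neighbours in $C_j$. *)

theory Defs
  imports Main
begin

text \<open>Vertices of J(n,w): binary vectors of length n with exactly w ones, represented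
  by their supports, i.e. the w-element subsets of {0..<n}.\<close>
definition johnson_vertices :: "nat \<Rightarrow> nat \<Rightarrow> nat set set" where
  "johnson_vertices n w = {A. A \<subseteq> {0..<n} \<and> card A = w}"

definition johnson_adj :: "nat \<Rightarrow> nat set \<Rightarrow> nat set \<Rightarrow> bool" where
  "johnson_adj w A B \<longleftrightarrow> card (A \<inter> B) = w - 1"

definition equitable_2partition ::
  "nat \<Rightarrow> nat \<Rightarrow> nat set set \<Rightarrow> nat set set \<Rightarrow> (nat \<Rightarrow> nat \<Rightarrow> int) \<Rightarrow> bool" where
  "equitable_2partition n w C1 C2 S \<longleftrightarrow>
     C1 \<noteq> {} \<and> C2 \<noteq> {} \<and> C1 \<inter> C2 = {} \<and> C1 \<union> C2 = johnson_vertices n w \<and>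
     (\<forall>i\<in>{1,2}. \<forall>j\<in>{1,2}.
        \<forall>x \<in> (if i = 1 then C1 else C2).
          int (card {y \<in> (if j = 1 then C1 else C2). johnson_adj w x y}) = S i j)"

end

theory Submission
  imports Defs
begin

text \<open>Let \<open>f\<close> be the indicator of the first cell on the \<open>w\<close>-subsets of \<open>{0..<n}\<close>. Equitability
  says that the sum of \<open>f\<close> over the neighbourhood of \<open>A\<close> is \<open>\<theta> f(A) + s\<^sub>2\<^sub>1\<close> with
  \<open>\<theta> = s\<^sub>1\<^sub>1 - s\<^sub>2\<^sub>1 = (w - 2)(n - w - 2) - 2\<close>. For points \<open>a \<noteq> b\<close> the swap difference
  \<open>g(B) = f(B \<union> {a}) - f(B \<union> {b})\<close> on the \<open>(w - 1)\<close>-subsets of the other points satisfies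
  the same kind of equation in \<open>J(n - 2, w - 1)\<close> with eigenvalue \<open>\<theta> + 1\<close>, and the swap
  differences of \<open>g\<close> do so in \<open>J(n - 4, w - 2)\<close> with eigenvalue \<open>\<theta> + 2\<close>, which is the degree
  of that graph. By the maximum principle they are constant, so \<open>g\<close> is additive:
  \<open>g(B) = \<gamma> + (\<Sum>t\<in>B. e t)\<close>. As \<open>g\<close> takes values in \<open>{-1, 0, 1}\<close> and sums to \<open>0\<close>
  (\<open>\<theta> + 1\<close> is not the degree), either \<open>g = 0\<close> (\<open>a\<close> and \<open>b\<close> are twins) or
  \<open>g(B) = [p \<in> B] - [q \<in> B]\<close>, which pins down \<open>f\<close> on the sets meeting \<open>{a, b, p, q}\<close> in one
  of \<open>a, b\<close> and one of \<open>p, q\<close> (a quad). With \<open>w \<ge> 4\<close> and \<open>n \<ge> w + 4\<close> there is room to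
  exhibit a set on which two quads, or a quad and the twin relations it forces, contradict each
  other. Hence all points are twins, \<open>f\<close> is constant and one cell is empty.\<close>

section \<open>Johnson graphs on \<open>k\<close>-subsets\<close>

definition ksubsets :: "'a set \<Rightarrow> nat \<Rightarrow> 'a set set" where
  "ksubsets X r = {A. A \<subseteq> X \<and> card A = r}"

definition johnson_nbhd :: "'a set \<Rightarrow> nat \<Rightarrow> 'a set \<Rightarrow> 'a set set" where
  "johnson_nbhd X r A = {B \<in> ksubsets X r. card (A \<inter> B) = r - 1}"

lemma mem_ksubsets_iff [simp]: "A \<in> ksubsets X r \<longleftrightarrow> A \<subseteq> X \<and> card A = r"
  by (simp add: ksubsets_def)

lemma finite_ksubsets: "finite X \<Longrightarrow> finite (ksubsets X r)"
  by (rule finite_subset[of _ "Pow X"]) auto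

lemma card_ksubsets: "finite X \<Longrightarrow> card (ksubsets X r) = card X choose r"
  by (simp add: ksubsets_def n_subsets)

lemma finite_johnson_nbhd: "finite X \<Longrightarrow> finite (johnson_nbhd X r A)"
  by (simp add: johnson_nbhd_def finite_ksubsets)

lemma johnson_nbhd_subset: "johnson_nbhd X r A \<subseteq> ksubsets X r"
  by (auto simp: johnson_nbhd_def)

lemma obtain_ksubset_avoiding:
  assumes "finite Z" "card Z + r \<le> card X"
  obtains D where "D \<subseteq> X - Z" "card D = r" "finite D"
proof -
  have "r \<le> card (X - Z)"
    using diff_card_le_card_Diff[OF assms(1), of X] assms(2) by linarith
  then show thesis
    using obtain_subset_with_card_n that by blast
qed

lemma obtain_subset_avoiding_list:
  assumes "k + length zs \<le> card X"
  obtains D where "D \<subseteq> X - set zs" "card D = k" "finite D"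
proof -
  have "card (set zs) + k \<le> card X"
    using card_length[of zs] assms by linarith
  then show thesis
    using obtain_ksubset_avoiding[OF finite_set] that by blast
qed

lemma swap_mem_johnson_nbhd:
  assumes "finite X" "A \<in> ksubsets X r" "c \<in> A" "d \<in> X - A"
  shows "insert d (A - {c}) \<in> johnson_nbhd X r A"
proof -
  have "finite A" "card A = r" "card A \<ge> 1"
    using assms finite_subset by (auto simp: Suc_le_eq card_gt_0_iff)
  moreover have "A \<inter> insert d (A - {c}) = A - {c}"
    using assms(4) by auto
  ultimately show ?thesis
    using assms by (auto simp: johnson_nbhd_def card.insert_remove)
qed

lemma johnson_nbhdE:
  assumes "finite X" "A \<in> ksubsets X r" "B \<in> johnson_nbhd X r A" "r \<ge> 1"
  obtains c d where "c \<in> A" "d \<in> X - A" "B = insert d (A - {c})"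
proof -
  have B: "B \<subseteq> X" "card B = r" "card (A \<inter> B) = r - 1"
    using assms(3) by (auto simp: johnson_nbhd_def)
  have "finite A" "finite B"
    using assms(1,2) B(1) finite_subset by auto
  then have "card (A - B) = 1" "card (B - A) = 1"
    using assms(2,4) B by (simp_all add: card_Diff_subset_Int Int_commute)
  then obtain c d where "A - B = {c}" "B - A = {d}"
    by (meson card_1_singletonE)
  with B(1) have "c \<in> A" "d \<in> X - A" "B = insert d (A - {c})"
    by auto
  then show thesis
    using that by blast
qed

lemma card_johnson_nbhd:
  assumes "finite X" "A \<in> ksubsets X r" "r \<ge> 1"
  shows "card (johnson_nbhd X r A) = r * (card X - r)"
proof -
  let ?swap = "\<lambda>(c, d). insert d (A - {c})"
  have "?swap ` (A \<times> (X - A)) = johnson_nbhd X r A"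
  proof
    show "?swap ` (A \<times> (X - A)) \<subseteq> johnson_nbhd X r A"
      using swap_mem_johnson_nbhd[OF assms(1,2)] by auto
    show "johnson_nbhd X r A \<subseteq> ?swap ` (A \<times> (X - A))"
    proof
      fix B assume "B \<in> johnson_nbhd X r A"
      then obtain c d where "c \<in> A" "d \<in> X - A" "B = insert d (A - {c})"
        using johnson_nbhdE[OF assms(1,2) _ assms(3)] by blast
      then show "B \<in> ?swap ` (A \<times> (X - A))"
        by (auto intro!: image_eqI[of _ _ "(c, d)"])
    qed
  qed
  moreover have "inj_on ?swap (A \<times> (X - A))"
  proof (rule inj_onI)
    fix p q
    assume "p \<in> A \<times> (X - A)" "q \<in> A \<times> (X - A)" "?swap p = ?swap q"
    then obtain c d c' d' where pq: "p = (c, d)" "q = (c', d')"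
      and "c \<in> A" "d \<in> X - A" "c' \<in> A" "d' \<in> X - A"
      and eq: "insert d (A - {c}) = insert d' (A - {c'})"
      by auto
    have "d = d'"
      using eq \<open>d \<in> X - A\<close> \<open>d' \<in> X - A\<close> by blast
    moreover have "c = c'"
    proof (rule ccontr)
      assume "c \<noteq> c'"
      then have "c' \<in> insert d' (A - {c'})"
        using eq \<open>c' \<in> A\<close> by blast
      then show False
        using \<open>c' \<in> A\<close> \<open>d' \<in> X - A\<close> by blast
    qed
    ultimately show "p = q"
      using pq by simp
  qed
  ultimately have "card (johnson_nbhd X r A) = card (A \<times> (X - A))"
    by (metis card_image)
  also have "\<dots> = r * (card X - r)"
    using assms by (auto simp: card_cartesian_product card_Diff_subset finite_subset)
  finally show ?thesis .
qed

lemma ksubsets_exchange_induct: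
  assumes X: "finite X" and A: "A \<in> ksubsets X r" and B: "B \<in> ksubsets X r"
    and base: "P A"
    and step: "\<And>C c d. C \<in> ksubsets X r \<Longrightarrow> c \<in> C \<Longrightarrow> d \<in> X - C \<Longrightarrow> P C
      \<Longrightarrow> P (insert d (C - {c}))"
  shows "P B"
  using A base
proof (induction "card (A - B)" arbitrary: A rule: less_induct)
  case less
  have fin: "finite A" "finite B"
    using X B less.prems(1) finite_subset by auto
  show ?case
  proof (cases "A - B = {}")
    case True
    then have "A = B"
      using fin less.prems(1) B card_subset_eq[of B A] by auto
    then show ?thesis
      using less.prems(2) by simp
  next
    case False
    then obtain c where c: "c \<in> A - B" by blast
    have pos: "card (A - B) > 0"
      using False fin by (simp add: card_gt_0_iff)
    moreover have "card (B - A) = card (A - B)"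
      using fin less.prems(1) B by (simp add: card_Diff_subset_Int Int_commute)
    ultimately have "B - A \<noteq> {}"
      by (metis card.empty less_irrefl)
    then obtain d where d: "d \<in> B - A" by blast
    let ?A' = "insert d (A - {c})"
    have "?A' \<in> johnson_nbhd X r A"
      using swap_mem_johnson_nbhd[OF X less.prems(1), of c d] c d B by auto
    then have "?A' \<in> ksubsets X r"
      using johnson_nbhd_subset by blast
    moreover have "P ?A'"
      using step[OF less.prems(1), of c d] c d B less.prems(2) by auto
    moreover have "?A' - B = (A - B) - {c}"
      using c d by auto
    then have "card (?A' - B) < card (A - B)"
      using c fin pos by simp
    ultimately show ?thesis
      using less.hyps by blast
  qed
qed

section \<open>Eigenfunctions of Johnson graphs\<close>

lemma johnson_eigen_degree_const:
  fixes F :: "'a set \<Rightarrow> int"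
  assumes X: "finite X" and r: "r \<ge> 1"
    and eigen: "\<And>A. A \<in> ksubsets X r \<Longrightarrow>
      (\<Sum>Y\<in>johnson_nbhd X r A. F Y) = int (r * (card X - r)) * F A"
    and A: "A \<in> ksubsets X r" and B: "B \<in> ksubsets X r"
  shows "F A = F B"
proof -
  have fin: "finite (ksubsets X r)"
    using finite_ksubsets[OF X] .
  define M where "M = Max (F ` ksubsets X r)"
  have le_M: "F Y \<le> M" if "Y \<in> ksubsets X r" for Y
    unfolding M_def using fin that by (intro Max_ge) auto
  have "M \<in> F ` ksubsets X r"
  proof -
    have "ksubsets X r \<noteq> {}"
      using A by blast
    then show ?thesis
      unfolding M_def using fin by (intro Max_in) auto
  qed
  then obtain A0 where A0: "A0 \<in> ksubsets X r" "F A0 = M"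
    by blast
  have "F C = M" if C: "C \<in> ksubsets X r" for C
  proof (rule ksubsets_exchange_induct[OF X A0(1) C])
    show "F A0 = M"
      by (rule A0(2))
  next
    fix C c d
    assume C: "C \<in> ksubsets X r" and cd: "c \<in> C" "d \<in> X - C" and FC: "F C = M"
    have "(\<Sum>Y\<in>johnson_nbhd X r C. M - F Y)
        = int (card (johnson_nbhd X r C)) * M - (\<Sum>Y\<in>johnson_nbhd X r C. F Y)"
      by (simp add: sum_subtractf)
    also have "\<dots> = 0"
      using eigen[OF C] card_johnson_nbhd[OF X C r] FC by simp
    finally have "(\<Sum>Y\<in>johnson_nbhd X r C. M - F Y) = 0" .
    moreover have "M - F Y \<ge> 0" if "Y \<in> johnson_nbhd X r C" for Y
      using le_M[OF subsetD[OF johnson_nbhd_subset that]] by simp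
    ultimately have "\<forall>Y\<in>johnson_nbhd X r C. M - F Y = 0"
      using sum_nonneg_eq_0_iff[OF finite_johnson_nbhd[OF X], of r C "\<lambda>Y. M - F Y"] by blast
    then show "F (insert d (C - {c})) = M"
      using swap_mem_johnson_nbhd[OF X C cd] by simp
  qed
  then show ?thesis
    using A B by simp
qed

lemma sum_johnson_nbhd_sums:
  fixes G :: "'a set \<Rightarrow> int"
  assumes X: "finite X" and r: "r \<ge> 1"
  shows "(\<Sum>A\<in>ksubsets X r. \<Sum>Y\<in>johnson_nbhd X r A. G Y)
    = int (r * (card X - r)) * (\<Sum>Y\<in>ksubsets X r. G Y)"
proof -
  have fin: "finite (ksubsets X r)"
    using finite_ksubsets[OF X] .
  have nbhd: "{A \<in> ksubsets X r. card (A \<inter> Y) = r - 1} = johnson_nbhd X r Y" for Y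
    by (auto simp: johnson_nbhd_def Int_commute)
  have "(\<Sum>A\<in>ksubsets X r. \<Sum>Y\<in>johnson_nbhd X r A. G Y)
      = (\<Sum>Y\<in>ksubsets X r. \<Sum>A\<in>{A \<in> ksubsets X r. card (A \<inter> Y) = r - 1}. G Y)"
    unfolding johnson_nbhd_def by (rule sum.swap_restrict[OF fin fin])
  also have "\<dots> = (\<Sum>Y\<in>ksubsets X r. int (r * (card X - r)) * G Y)"
    unfolding nbhd using card_johnson_nbhd[OF X _ r] by simp
  finally show ?thesis
    by (simp add: sum_distrib_left)
qed

lemma johnson_eigen_sum_zero:
  fixes G :: "'a set \<Rightarrow> int"
  assumes X: "finite X" and r: "r \<ge> 1"
    and eigen: "\<And>A. A \<in> ksubsets X r \<Longrightarrow> (\<Sum>Y\<in>johnson_nbhd X r A. G Y) = \<mu> * G A"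
    and not_degree: "\<mu> \<noteq> int (r * (card X - r))"
  shows "(\<Sum>A\<in>ksubsets X r. G A) = 0"
proof -
  have "\<mu> * (\<Sum>A\<in>ksubsets X r. G A) = int (r * (card X - r)) * (\<Sum>A\<in>ksubsets X r. G A)"
    using sum_johnson_nbhd_sums[OF X r, of G] eigen by (simp add: sum_distrib_left)
  then show ?thesis
    using not_degree by simp
qed

lemma johnson_nbhd_insert_gain:
  assumes X: "finite X" and ij: "i \<in> X" "i \<noteq> j" and r: "r \<ge> 2"
    and B: "B \<in> ksubsets (X - {i, j}) (r - 1)"
  shows "{Y \<in> johnson_nbhd X r (insert i B). i \<in> Y \<and> j \<notin> Y}
    = insert i ` johnson_nbhd (X - {i, j}) (r - 1) B"
proof (intro set_eqI iffI)
  have fin: "finite B" "i \<notin> B" "j \<notin> B"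
    using B X finite_subset by auto
  fix Y
  {
    assume "Y \<in> {Y \<in> johnson_nbhd X r (insert i B). i \<in> Y \<and> j \<notin> Y}"
    then have Y: "Y \<subseteq> X" "card Y = r" "card (insert i B \<inter> Y) = r - 1" "i \<in> Y" "j \<notin> Y"
      by (auto simp: johnson_nbhd_def)
    have "finite Y"
      using Y(1) X finite_subset by blast
    moreover have "insert i B \<inter> Y = insert i (B \<inter> (Y - {i}))"
      using Y(4) by auto
    ultimately have "Y - {i} \<in> johnson_nbhd (X - {i, j}) (r - 1) B"
      using Y fin by (auto simp: johnson_nbhd_def)
    moreover have "Y = insert i (Y - {i})"
      using Y(4) by auto
    ultimately show "Y \<in> insert i ` johnson_nbhd (X - {i, j}) (r - 1) B"
      by blast
  next
    assume "Y \<in> insert i ` johnson_nbhd (X - {i, j}) (r - 1) B"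
    then obtain Y' where "Y' \<in> johnson_nbhd (X - {i, j}) (r - 1) B" and Y: "Y = insert i Y'"
      by blast
    then have Y': "Y' \<subseteq> X - {i, j}" "card Y' = r - 1" "card (B \<inter> Y') = r - 1 - 1"
      by (simp_all add: johnson_nbhd_def)
    have "finite Y'" "i \<notin> Y'"
      using Y'(1) X finite_subset by auto
    moreover have "insert i B \<inter> Y = insert i (B \<inter> Y')"
      using Y by auto
    ultimately show "Y \<in> {Y \<in> johnson_nbhd X r (insert i B). i \<in> Y \<and> j \<notin> Y}"
      using Y Y' fin ij r by (auto simp: johnson_nbhd_def)
  }
qed

lemma johnson_nbhd_insert_swap:
  assumes X: "finite X" and ij: "j \<in> X" "i \<noteq> j" and r: "r \<ge> 1"
    and B: "B \<in> ksubsets (X - {i, j}) (r - 1)"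
  shows "{Y \<in> johnson_nbhd X r (insert i B). i \<notin> Y \<and> j \<in> Y} = {insert j B}"
proof (intro set_eqI iffI)
  have fin: "finite B" "i \<notin> B" "j \<notin> B" "card B = r - 1"
    using B X finite_subset by auto
  fix Y
  {
    assume "Y \<in> {Y \<in> johnson_nbhd X r (insert i B). i \<notin> Y \<and> j \<in> Y}"
    then have Y: "Y \<subseteq> X" "card Y = r" "card (insert i B \<inter> Y) = r - 1" "i \<notin> Y" "j \<in> Y"
      by (auto simp: johnson_nbhd_def)
    have "finite Y"
      using Y(1) X finite_subset by blast
    have "card (B \<inter> Y) = card B"
      using Y(3,4) fin(4) by (simp add: Int_insert_left)
    then have "B \<inter> Y = B"
      using card_subset_eq[OF fin(1) Int_lower1] by blast
    then have "B \<subseteq> Y"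
      by blast
    then have sub: "insert j B \<subseteq> Y"
      using Y(5) by blast
    have "card (insert j B) = card Y"
      using fin r Y(2) by simp
    then have "insert j B = Y"
      using card_subset_eq[OF \<open>finite Y\<close> sub] by blast
    then show "Y \<in> {insert j B}"
      by simp
  next
    assume "Y \<in> {insert j B}"
    moreover have "insert i B \<inter> insert j B = B"
      using fin ij by auto
    ultimately show "Y \<in> {Y \<in> johnson_nbhd X r (insert i B). i \<notin> Y \<and> j \<in> Y}"
      using fin B ij r by (auto simp: johnson_nbhd_def)
  }
qed

lemma johnson_nbhd_insert_balanced:
  assumes "finite B" "i \<notin> B" "j \<notin> B"
  shows "{Y \<in> johnson_nbhd X r (insert i B). (i \<in> Y) = (j \<in> Y)}
    = {Y \<in> johnson_nbhd X r (insert j B). (i \<in> Y) = (j \<in> Y)}"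
proof -
  have eq: "card (insert i B \<inter> Y) = card (insert j B \<inter> Y)" if "(i \<in> Y) = (j \<in> Y)" for Y
  proof (cases "i \<in> Y")
    case True
    then show ?thesis
      using that assms by (simp add: Int_insert_left card_insert_if)
  next
    case False
    then show ?thesis
      using that assms by (simp add: Int_insert_left)
  qed
  show ?thesis
  proof (intro set_eqI)
    fix Y
    show "Y \<in> {Y \<in> johnson_nbhd X r (insert i B). (i \<in> Y) = (j \<in> Y)}
      \<longleftrightarrow> Y \<in> {Y \<in> johnson_nbhd X r (insert j B). (i \<in> Y) = (j \<in> Y)}"
      using eq[of Y] by (cases "(i \<in> Y) = (j \<in> Y)") (simp_all add: johnson_nbhd_def)
  qed
qed

lemma sum_johnson_nbhd_insert:
  assumes X: "finite X" and ij: "i \<in> X" "j \<in> X" "i \<noteq> j" and r: "r \<ge> 2"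
    and B: "B \<in> ksubsets (X - {i, j}) (r - 1)"
  shows "(\<Sum>Y\<in>johnson_nbhd X r (insert i B). F Y)
    = (\<Sum>Y\<in>{Y \<in> johnson_nbhd X r (insert i B). (i \<in> Y) = (j \<in> Y)}. F Y)
      + (\<Sum>Y\<in>johnson_nbhd (X - {i, j}) (r - 1) B. F (insert i Y)) + F (insert j B)"
proof -
  let ?N = "johnson_nbhd X r (insert i B)" and ?N' = "johnson_nbhd (X - {i, j}) (r - 1) B"
  let ?S = "{Y. (i \<in> Y) = (j \<in> Y)}"
  have "?N - ?S = {Y \<in> ?N. i \<in> Y \<and> j \<notin> Y} \<union> {Y \<in> ?N. i \<notin> Y \<and> j \<in> Y}"
    by auto
  also have "\<dots> = insert (insert j B) (insert i ` ?N')"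
    using johnson_nbhd_insert_gain[OF X ij(1,3) r B] johnson_nbhd_insert_swap[OF X ij(2,3) _ B] r
    by simp
  finally have diff: "?N - ?S = insert (insert j B) (insert i ` ?N')" .
  have "insert j B \<notin> insert i ` ?N'"
    using B ij(3) by auto
  moreover have "inj_on (insert i) ?N'"
    by (rule inj_onI) (auto simp: johnson_nbhd_def)
  ultimately have "sum F (?N - ?S) = F (insert j B) + (\<Sum>Y\<in>?N'. F (insert i Y))"
    unfolding diff by (simp add: finite_johnson_nbhd X sum.reindex)
  moreover have "sum F ?N = sum F (?N \<inter> ?S) + sum F (?N - ?S)"
    by (rule sum.Int_Diff[OF finite_johnson_nbhd[OF X]])
  moreover have "?N \<inter> ?S = {Y \<in> ?N. (i \<in> Y) = (j \<in> Y)}"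
    by auto
  ultimately show ?thesis
    by (simp add: ac_simps)
qed

lemma johnson_swap_diff_eigen:
  fixes F :: "'a set \<Rightarrow> int"
  assumes X: "finite X" and ij: "i \<in> X" "j \<in> X" "i \<noteq> j" and r: "r \<ge> 2"
    and eigen: "\<And>A. A \<in> ksubsets X r \<Longrightarrow> (\<Sum>Y\<in>johnson_nbhd X r A. F Y) = \<mu> * F A + \<kappa>"
    and B: "B \<in> ksubsets (X - {i, j}) (r - 1)"
  shows "(\<Sum>Y\<in>johnson_nbhd (X - {i, j}) (r - 1) B. F (insert i Y) - F (insert j Y))
    = (\<mu> + 1) * (F (insert i B) - F (insert j B))"
proof -
  have B': "B \<in> ksubsets (X - {j, i}) (r - 1)"
    using B by (simp add: insert_commute)
  have fin: "finite B" "i \<notin> B" "j \<notin> B"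
    using B X finite_subset by auto
  have "insert i B \<in> ksubsets X r" "insert j B \<in> ksubsets X r"
    using B fin ij r by auto
  then have eig: "(\<Sum>Y\<in>johnson_nbhd X r (insert i B). F Y) = \<mu> * F (insert i B) + \<kappa>"
    "(\<Sum>Y\<in>johnson_nbhd X r (insert j B). F Y) = \<mu> * F (insert j B) + \<kappa>"
    using eigen by blast+
  have "{Y \<in> johnson_nbhd X r (insert j B). (j \<in> Y) = (i \<in> Y)}
      = {Y \<in> johnson_nbhd X r (insert i B). (i \<in> Y) = (j \<in> Y)}"
    using johnson_nbhd_insert_balanced[OF fin, of X r] by blast
  then have "(\<Sum>Y\<in>johnson_nbhd X r (insert j B). F Y)
      = (\<Sum>Y\<in>{Y \<in> johnson_nbhd X r (insert i B). (i \<in> Y) = (j \<in> Y)}. F Y)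
        + (\<Sum>Y\<in>johnson_nbhd (X - {i, j}) (r - 1) B. F (insert j Y)) + F (insert i B)"
    using sum_johnson_nbhd_insert[OF X ij(2,1) ij(3)[symmetric] r B', of F]
    by (simp add: insert_commute)
  then show ?thesis
    using sum_johnson_nbhd_insert[OF X ij r B, of F] eig
    by (simp add: sum_subtractf algebra_simps)
qed

section \<open>Additive functions on \<open>k\<close>-subsets\<close>

lemma swap_diff_potential:
  fixes G :: "'a set \<Rightarrow> int"
  assumes X: "finite X" and r: "r \<ge> 1" and big: "r + 2 \<le> card X"
    and inv: "\<And>c d C C'. c \<in> X \<Longrightarrow> d \<in> X \<Longrightarrow> c \<noteq> d
      \<Longrightarrow> C \<in> ksubsets (X - {c, d}) (r - 1) \<Longrightarrow> C' \<in> ksubsets (X - {c, d}) (r - 1)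
      \<Longrightarrow> G (insert c C) - G (insert d C) = G (insert c C') - G (insert d C')"
  obtains e where "\<And>c d D. c \<in> X \<Longrightarrow> d \<in> X \<Longrightarrow> c \<noteq> d \<Longrightarrow> D \<in> ksubsets (X - {c, d}) (r - 1)
    \<Longrightarrow> G (insert c D) - G (insert d D) = e c - e d"
proof -
  have avoid: "\<exists>C. C \<in> ksubsets (X - Z) (r - 1)" if "finite Z" "card Z \<le> 3" for Z
    using obtain_ksubset_avoiding[OF that(1), of "r - 1" X] that(2) big r by force
  obtain t0 where t0: "t0 \<in> X"
    using big by fastforce
  define C where "C t = (SOME C. C \<in> ksubsets (X - {t, t0}) (r - 1))" for t
  have C: "C t \<in> ksubsets (X - {t, t0}) (r - 1)" for t
    unfolding C_def by (rule someI_ex) (rule avoid, auto simp: card_insert_le_m1)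
  define e where "e t = G (insert t (C t)) - G (insert t0 (C t))" for t
  have e: "G (insert t D) - G (insert t0 D) = e t"
    if "t \<in> X" "D \<in> ksubsets (X - {t, t0}) (r - 1)" for t D
    using inv[OF that(1) t0 _ that(2) C] unfolding e_def by (cases "t = t0") auto
  have "G (insert c D) - G (insert d D) = e c - e d"
    if "c \<in> X" "d \<in> X" "c \<noteq> d" "D \<in> ksubsets (X - {c, d}) (r - 1)" for c d D
  proof -
    obtain D' where D': "D' \<in> ksubsets (X - {c, d, t0}) (r - 1)"
      using avoid[of "{c, d, t0}"] by (auto simp: card_insert_le_m1)
    then have D'_cd: "D' \<in> ksubsets (X - {c, d}) (r - 1)"
      and D'_c: "D' \<in> ksubsets (X - {c, t0}) (r - 1)"
      and D'_d: "D' \<in> ksubsets (X - {d, t0}) (r - 1)"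
      by auto
    have "G (insert c D) - G (insert d D) = G (insert c D') - G (insert d D')"
      by (rule inv[OF that D'_cd])
    also have "\<dots> = (G (insert c D') - G (insert t0 D')) - (G (insert d D') - G (insert t0 D'))"
      by simp
    also have "\<dots> = e c - e d"
      using e[OF that(1) D'_c] e[OF that(2) D'_d] by simp
    finally show ?thesis .
  qed
  then show thesis
    by (rule that)
qed

lemma additive_if_swap_diff_potential:
  fixes G :: "'a set \<Rightarrow> int"
  assumes X: "finite X" and B0: "B0 \<in> ksubsets X r" and B: "B \<in> ksubsets X r"
    and pot: "\<And>c d D. c \<in> X \<Longrightarrow> d \<in> X \<Longrightarrow> c \<noteq> d \<Longrightarrow> D \<in> ksubsets (X - {c, d}) (r - 1)
      \<Longrightarrow> G (insert c D) - G (insert d D) = e c - e d"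
  shows "G B = (G B0 - (\<Sum>t\<in>B0. e t)) + (\<Sum>t\<in>B. e t)"
proof -
  have "G B - (\<Sum>t\<in>B. e t) = G B0 - (\<Sum>t\<in>B0. e t)"
  proof (rule ksubsets_exchange_induct[OF X B0 B])
    fix D c d
    assume D: "D \<in> ksubsets X r" and cd: "c \<in> D" "d \<in> X - D"
      and IH: "G D - (\<Sum>t\<in>D. e t) = G B0 - (\<Sum>t\<in>B0. e t)"
    have fin: "finite D"
      using D X finite_subset by auto
    have Dc: "D - {c} \<in> ksubsets (X - {d, c}) (r - 1)"
      using D cd fin by auto
    have "d \<in> X" "c \<in> X" "d \<noteq> c"
      using D cd by auto
    then have "G (insert d (D - {c})) - G (insert c (D - {c})) = e d - e c"
      using pot Dc by blast
    moreover have "insert c (D - {c}) = D"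
      using cd by auto
    moreover have "(\<Sum>t\<in>D. e t) = e c + (\<Sum>t\<in>D - {c}. e t)"
      using fin cd by (simp add: sum.remove)
    ultimately show "G (insert d (D - {c})) - (\<Sum>t\<in>insert d (D - {c}). e t)
        = G B0 - (\<Sum>t\<in>B0. e t)"
      using IH fin cd by simp
  qed simp
  then show ?thesis
    by simp
qed

lemma additive_if_swap_diff_invariant:
  fixes G :: "'a set \<Rightarrow> int"
  assumes X: "finite X" and r: "r \<ge> 1" and big: "r + 2 \<le> card X"
    and inv: "\<And>c d C C'. c \<in> X \<Longrightarrow> d \<in> X \<Longrightarrow> c \<noteq> d
      \<Longrightarrow> C \<in> ksubsets (X - {c, d}) (r - 1) \<Longrightarrow> C' \<in> ksubsets (X - {c, d}) (r - 1)
      \<Longrightarrow> G (insert c C) - G (insert d C) = G (insert c C') - G (insert d C')"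
  obtains \<gamma> e where "\<And>B. B \<in> ksubsets X r \<Longrightarrow> G B = \<gamma> + (\<Sum>t\<in>B. e t)"
proof -
  obtain e where pot: "\<And>c d D. c \<in> X \<Longrightarrow> d \<in> X \<Longrightarrow> c \<noteq> d \<Longrightarrow> D \<in> ksubsets (X - {c, d}) (r - 1)
      \<Longrightarrow> G (insert c D) - G (insert d D) = e c - e d"
    using swap_diff_potential[where G = G, OF X r big inv] by blast
  obtain B0 where "B0 \<subseteq> X - {}" "card B0 = r"
    using obtain_ksubset_avoiding[of "{}" r X] big by auto
  then have B0: "B0 \<in> ksubsets X r"
    by simp
  have "G B = (G B0 - (\<Sum>t\<in>B0. e t)) + (\<Sum>t\<in>B. e t)" if "B \<in> ksubsets X r" for B
    by (rule additive_if_swap_diff_potential[where G = G and e = e, OF X B0 that pot])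
  then show thesis
    by (rule that)
qed

lemma card_ksubsets_containing:
  assumes X: "finite X" and t: "t \<in> X" and r: "r \<ge> 1"
  shows "card {B \<in> ksubsets X r. t \<in> B} = (card X - 1) choose (r - 1)"
proof -
  have "{B \<in> ksubsets X r. t \<in> B} = insert t ` ksubsets (X - {t}) (r - 1)"
  proof (intro set_eqI iffI)
    fix B
    assume B: "B \<in> {B \<in> ksubsets X r. t \<in> B}"
    then have "B - {t} \<in> ksubsets (X - {t}) (r - 1)"
      using X finite_subset by auto
    moreover have "B = insert t (B - {t})"
      using B by auto
    ultimately show "B \<in> insert t ` ksubsets (X - {t}) (r - 1)"
      by blast
  next
    fix B
    assume "B \<in> insert t ` ksubsets (X - {t}) (r - 1)"
    then obtain B' where "B' \<in> ksubsets (X - {t}) (r - 1)" "B = insert t B'"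
      by blast
    then have "B' \<subseteq> X - {t}" "card B' = r - 1" "B = insert t B'"
      by auto
    moreover have "finite B'" "t \<notin> B'"
      using \<open>B' \<subseteq> X - {t}\<close> X finite_subset by auto
    ultimately show "B \<in> {B \<in> ksubsets X r. t \<in> B}"
      using t r by auto
  qed
  moreover have "inj_on (insert t) (ksubsets (X - {t}) (r - 1))"
    by (rule inj_onI) auto
  ultimately show ?thesis
    using X t by (simp add: card_image card_ksubsets)
qed

lemma sum_ksubsets_sum:
  fixes e :: "'a \<Rightarrow> int"
  assumes X: "finite X" and r: "r \<ge> 1"
  shows "(\<Sum>B\<in>ksubsets X r. \<Sum>t\<in>B. e t) = int ((card X - 1) choose (r - 1)) * (\<Sum>t\<in>X. e t)"
proof -
  have fin: "finite (ksubsets X r)"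
    using finite_ksubsets[OF X] .
  have "(\<Sum>B\<in>ksubsets X r. \<Sum>t\<in>B. e t) = (\<Sum>B\<in>ksubsets X r. \<Sum>t\<in>{t \<in> X. t \<in> B}. e t)"
    by (intro sum.cong refl) auto
  also have "\<dots> = (\<Sum>t\<in>X. \<Sum>B\<in>{B \<in> ksubsets X r. t \<in> B}. e t)"
    by (rule sum.swap_restrict[OF fin X])
  also have "\<dots> = (\<Sum>t\<in>X. int ((card X - 1) choose (r - 1)) * e t)"
    using card_ksubsets_containing[OF X _ r] by simp
  finally show ?thesis
    by (simp add: sum_distrib_left)
qed

lemma balanced_if_additive_sum_zero:
  fixes e :: "'a \<Rightarrow> int"
  assumes X: "finite X" and r: "1 \<le> r" "r \<le> card X"
    and zero: "(\<Sum>B\<in>ksubsets X r. \<gamma> + (\<Sum>t\<in>B. e t)) = 0"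
  shows "int (card X) * \<gamma> + int r * (\<Sum>t\<in>X. e t) = 0"
proof -
  define m where "m = card X"
  have sum0: "int (m choose r) * \<gamma> + int ((m - 1) choose (r - 1)) * (\<Sum>t\<in>X. e t) = 0"
    using zero sum_ksubsets_sum[OF X r(1), of e] card_ksubsets[OF X, of r]
    by (simp add: sum.distrib m_def mult.commute)
  have binom: "int r * int (m choose r) = int m * int ((m - 1) choose (r - 1))"
    using times_binomial_minus1_eq[of r m] r(1) by (simp flip: of_nat_mult)
  have "int (m choose r) * (int m * \<gamma> + int r * (\<Sum>t\<in>X. e t))
      = int m * int (m choose r) * \<gamma> + (int r * int (m choose r)) * (\<Sum>t\<in>X. e t)"
    by (simp add: algebra_simps)
  also have "\<dots> = int m * (int (m choose r) * \<gamma> + int ((m - 1) choose (r - 1)) * (\<Sum>t\<in>X. e t))"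
    unfolding binom by (simp add: algebra_simps)
  also have "\<dots> = 0"
    using sum0 by simp
  finally have "int (m choose r) * (int m * \<gamma> + int r * (\<Sum>t\<in>X. e t)) = 0" .
  moreover have "m choose r \<noteq> 0"
    using r(2) unfolding m_def by simp
  ultimately show ?thesis
    unfolding m_def by simp
qed

lemma additive_exchange_bound:
  fixes e :: "'a \<Rightarrow> int"
  assumes X: "finite X"
    and range: "\<And>B. B \<in> ksubsets X r \<Longrightarrow> \<bar>\<gamma> + (\<Sum>t\<in>B. e t)\<bar> \<le> 1"
    and PQ: "P \<subseteq> X" "Q \<subseteq> X" "P \<inter> Q = {}" "card P = k" "card Q = k"
    and k: "k \<le> r" "r + k \<le> card X"
  shows "(\<Sum>t\<in>P. e t) - (\<Sum>t\<in>Q. e t) \<le> 2"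
proof -
  have fin: "finite P" "finite Q"
    using PQ(1,2) X finite_subset by auto
  then have "card (P \<union> Q) = 2 * k"
    using PQ(3-5) by (simp add: card_Un_disjoint)
  then obtain D where D: "D \<subseteq> X - (P \<union> Q)" "card D = r - k" "finite D"
    using obtain_ksubset_avoiding[of "P \<union> Q" "r - k" X] fin k by auto
  have sum_val: "\<gamma> + (\<Sum>t\<in>R \<union> D. e t) = \<gamma> + (\<Sum>t\<in>R. e t) + (\<Sum>t\<in>D. e t)"
    and mem: "R \<union> D \<in> ksubsets X r"
    if R: "finite R" "R \<subseteq> X" "R \<inter> D = {}" "card R = k" for R
  proof -
    show "\<gamma> + (\<Sum>t\<in>R \<union> D. e t) = \<gamma> + (\<Sum>t\<in>R. e t) + (\<Sum>t\<in>D. e t)"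
      using R(1,3) D(3) by (simp add: sum.union_disjoint)
    have "card (R \<union> D) = r"
      using R(1,3,4) D(2,3) k(1) by (simp add: card_Un_disjoint)
    then show "R \<union> D \<in> ksubsets X r"
      using R(2) D(1) by auto
  qed
  have "P \<inter> D = {}" "Q \<inter> D = {}"
    using D(1) by auto
  then show ?thesis
    using range[OF mem[of P]] range[OF mem[of Q]] sum_val[of P] sum_val[of Q] fin PQ
    by (simp add: abs_le_iff)
qed

lemma sum_two_level:
  fixes e :: "'a \<Rightarrow> int"
  assumes "finite B" "\<And>t. t \<in> B \<Longrightarrow> e t = \<mu> + of_bool (t \<in> S)"
  shows "(\<Sum>t\<in>B. e t) = int (card B) * \<mu> + int (card (B \<inter> S))"
proof -
  have "(\<Sum>t\<in>B. e t) = (\<Sum>t\<in>B. \<mu> + of_bool (t \<in> S))"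
    using assms(2) by (rule sum.cong[OF refl])
  then show ?thesis
    using assms(1) by (simp add: sum.distrib)
qed

lemma additive_two_level_small_side:
  fixes e :: "'a \<Rightarrow> int"
  assumes X: "finite X" and r: "3 \<le> r" and big: "r + 3 \<le> card X"
    and range: "\<And>B. B \<in> ksubsets X r \<Longrightarrow> \<bar>\<gamma> + (\<Sum>t\<in>B. e t)\<bar> \<le> 1"
    and S: "S \<subseteq> X" and e: "\<And>t. t \<in> X \<Longrightarrow> e t = \<mu> + of_bool (t \<in> S)"
  shows "card S \<le> 2 \<or> card (X - S) \<le> 2"
proof (rule ccontr)
  assume "\<not> ?thesis"
  then have "3 \<le> card S" "3 \<le> card (X - S)"
    by auto
  then obtain P Q where P: "P \<subseteq> S" "card P = 3" and Q: "Q \<subseteq> X - S" "card Q = 3"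
    using obtain_subset_with_card_n by metis
  have "finite P" "finite Q"
    using P(2) Q(2) by (auto intro: card_ge_0_finite)
  then have "(\<Sum>t\<in>P. e t) = 3 * \<mu> + 3" "(\<Sum>t\<in>Q. e t) = 3 * \<mu>"
    using sum_two_level[of P e \<mu> S] sum_two_level[of Q e \<mu> S] P Q S e
    by (auto simp: Int_absorb2 Diff_Int_distrib2 subset_iff)
  moreover have "(\<Sum>t\<in>P. e t) - (\<Sum>t\<in>Q. e t) \<le> 2"
    by (rule additive_exchange_bound[OF X range]) (use P Q S r big in auto)
  ultimately show False
    by simp
qed

lemma additive_two_level_impossible:
  fixes e :: "'a \<Rightarrow> int"
  assumes X: "finite X" and r: "3 \<le> r" and big: "2 * r + 1 \<le> card X"
    and range: "\<And>B. B \<in> ksubsets X r \<Longrightarrow> \<bar>\<gamma> + (\<Sum>t\<in>B. e t)\<bar> \<le> 1"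
    and balanced: "int (card X) * \<gamma> + int r * (\<Sum>t\<in>X. e t) = 0"
    and S: "S \<subseteq> X" "S \<noteq> {}" "S \<noteq> X"
    and e: "\<And>t. t \<in> X \<Longrightarrow> e t = \<mu> + of_bool (t \<in> S)"
  shows False
proof -
  define m where "m = card X"
  have fin: "finite S" "finite (X - S)"
    using X S(1) finite_subset by auto
  have card_split: "card S + card (X - S) = m"
    unfolding m_def using card_Diff_subset[OF fin(1) S(1)] card_mono[OF X S(1)] by simp
  have small: "card S \<le> 2 \<or> card (X - S) \<le> 2"
    by (rule additive_two_level_small_side[OF X r _ range S(1) e]) (use big r in simp)
  have "(\<Sum>t\<in>X. e t) = int m * \<mu> + int (card S)"
    using sum_two_level[OF X e] S(1) unfolding m_def by (simp add: Int_absorb1)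
  then have eq_S: "int m * (\<gamma> + int r * \<mu>) = - (int r * int (card S))"
    using balanced unfolding m_def by (simp add: algebra_simps)
  have "int m * (\<gamma> + int r * \<mu> + int r) = int m * (\<gamma> + int r * \<mu>) + int r * int m"
    by (simp add: algebra_simps)
  also have "\<dots> = - (int r * int (card S)) + int r * (int (card S) + int (card (X - S)))"
    using eq_S card_split by (simp flip: of_nat_add)
  finally have eq_L: "int m * (\<gamma> + int r * \<mu> + int r) = int r * int (card (X - S))"
    by (simp add: algebra_simps)
  have pos: "card S > 0" "card (X - S) > 0"
    using S fin by (auto simp: card_gt_0_iff)
  txt \<open>The balance condition makes \<open>card X\<close> divide both \<open>r card S\<close> and \<open>r card (X - S)\<close>, but one
    of them is positive and smaller than \<open>card X\<close>.\<close>
  have too_small: False if "0 < k" "k \<le> 2" "int m dvd int r * int k" for k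
  proof -
    have "r * k \<le> r * 2"
      using that(2) by (rule mult_le_mono2)
    then have "r * k < m"
      using big unfolding m_def by linarith
    then have "int r * int k < int m"
      by (simp flip: of_nat_mult)
    moreover have "0 < int r * int k"
      using that(1) r by simp
    ultimately show False
      using zdvd_imp_le[OF that(3)] by simp
  qed
  have "int m dvd - (int r * int (card S))"
    unfolding eq_S[symmetric] by (rule dvd_triv_left)
  then have dvd_S: "int m dvd int r * int (card S)"
    by (simp only: dvd_minus_iff)
  have dvd_L: "int m dvd int r * int (card (X - S))"
    unfolding eq_L[symmetric] by (rule dvd_triv_left)
  from small show False
    using too_small[OF pos(1) _ dvd_S] too_small[OF pos(2) _ dvd_L] by blast
qed

lemma additive_three_level_signed_indicator:
  fixes e :: "'a \<Rightarrow> int"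
  assumes X: "finite X" and r: "1 \<le> r" and big: "2 * r + 1 \<le> card X"
    and range: "\<And>B. B \<in> ksubsets X r \<Longrightarrow> \<bar>\<gamma> + (\<Sum>t\<in>B. e t)\<bar> \<le> 1"
    and balanced: "int (card X) * \<gamma> + int r * (\<Sum>t\<in>X. e t) = 0"
    and s: "s \<in> X" "s' \<in> X" "s \<noteq> s'"
    and mid: "\<And>t. t \<in> X - {s, s'} \<Longrightarrow> e t = v"
    and gap: "e s = e s' + 2"
    and B: "B \<in> ksubsets X r"
  shows "\<gamma> + (\<Sum>t\<in>B. e t) = of_bool (s \<in> B) - of_bool (s' \<in> B)"
proof -
  define m where "m = card X"
  define a a' where "a = e s - v" and "a' = e s' - v"
  define \<alpha> where "\<alpha> = \<gamma> + int r * v"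
  have sum_e: "(\<Sum>t\<in>D. e t) = int (card D) * v + (if s \<in> D then a else 0) + (if s' \<in> D then a' else 0)"
    if "D \<subseteq> X" for D
  proof -
    have "finite D"
      using that X finite_subset by auto
    have "(\<Sum>t\<in>D. e t) = (\<Sum>t\<in>D. v + (if t = s then a else 0) + (if t = s' then a' else 0))"
      using that mid s(3) unfolding a_def a'_def by (intro sum.cong) auto
    also have "\<dots> = int (card D) * v + (if s \<in> D then a else 0) + (if s' \<in> D then a' else 0)"
      using \<open>finite D\<close> by (simp add: sum.distrib sum.delta')
    finally show ?thesis .
  qed
  have value_e: "\<gamma> + (\<Sum>t\<in>D. e t) = \<alpha> + (if s \<in> D then a else 0) + (if s' \<in> D then a' else 0)"
    if "D \<in> ksubsets X r" for D
    using sum_e[of D] that unfolding \<alpha>_def by simp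
  have "finite {s, s'}" "card {s, s'} + (r - 1) \<le> card X"
    using s(3) big r by simp_all
  then obtain C where C: "C \<subseteq> X - {s, s'}" "card C = r - 1" "finite C"
    by (rule obtain_ksubset_avoiding)
  have "s \<notin> C" "s' \<notin> C"
    using C(1) by auto
  then have B1: "insert s C \<in> ksubsets X r" and B2: "insert s' C \<in> ksubsets X r"
    using C s r by auto
  have "\<gamma> + (\<Sum>t\<in>insert s C. e t) = \<alpha> + a" "\<gamma> + (\<Sum>t\<in>insert s' C. e t) = \<alpha> + a'"
    using value_e[OF B1] value_e[OF B2] \<open>s \<notin> C\<close> \<open>s' \<notin> C\<close> s(3)
    by simp_all
  then have "\<alpha> + a \<le> 1" "-1 \<le> \<alpha> + a'"
    using range[OF B1] range[OF B2] by (simp_all add: abs_le_iff)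
  moreover have "a = a' + 2"
    using gap unfolding a_def a'_def by simp
  ultimately have a_val: "a = 1 - \<alpha>" and a'_val: "a' = -1 - \<alpha>"
    by linarith+
  have "(\<Sum>t\<in>X. e t) = int m * v + a + a'"
    using sum_e[of X] s unfolding m_def by simp
  then have "int m * \<alpha> + int r * (a + a') = 0"
    using balanced unfolding \<alpha>_def m_def by (simp add: algebra_simps)
  moreover have "int m * \<alpha> + int r * (a + a') = \<alpha> * (int m - 2 * int r)"
    unfolding a_val a'_val by (simp add: algebra_simps)
  ultimately have "\<alpha> * (int m - 2 * int r) = 0"
    by simp
  moreover have "int m - 2 * int r \<noteq> 0"
    using big unfolding m_def by simp
  ultimately have "\<alpha> = 0"
    by simp
  then show ?thesis
    using value_e[OF B] a_val a'_val by simp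
qed

lemma additive_constant_vanishes:
  fixes e :: "'a \<Rightarrow> int"
  assumes X: "finite X" "X \<noteq> {}"
    and balanced: "int (card X) * \<gamma> + int r * (\<Sum>t\<in>X. e t) = 0"
    and const: "\<And>t. t \<in> X \<Longrightarrow> e t = \<mu>" and B: "B \<in> ksubsets X r"
  shows "\<gamma> + (\<Sum>t\<in>B. e t) = 0"
proof -
  have "(\<Sum>t\<in>X. e t) = int (card X) * \<mu>" "(\<Sum>t\<in>B. e t) = int r * \<mu>"
    using const B by (simp_all add: subset_iff)
  then have "int (card X) * (\<gamma> + (\<Sum>t\<in>B. e t)) = 0"
    using balanced by (simp add: algebra_simps)
  then show ?thesis
    using X by simp
qed

lemma additive_gap_two_middle_const:
  fixes e :: "'a \<Rightarrow> int"
  assumes X: "finite X" and r: "2 \<le> r" and big: "r + 2 \<le> card X"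
    and range: "\<And>B. B \<in> ksubsets X r \<Longrightarrow> \<bar>\<gamma> + (\<Sum>t\<in>B. e t)\<bar> \<le> 1"
    and s: "s \<in> X" "s' \<in> X" "s \<noteq> s'" and gap: "e s = e s' + 2"
    and pq: "p \<in> X - {s, s'}" "q \<in> X - {s, s'}"
  shows "e p = e q"
proof -
  have "e p \<le> e q" if "p \<in> X - {s, s'}" "q \<in> X - {s, s'}" for p q
  proof (cases "p = q")
    case False
    have "(\<Sum>t\<in>{s, p}. e t) - (\<Sum>t\<in>{s', q}. e t) \<le> 2"
      by (rule additive_exchange_bound[OF X range]) (use that False s r big in auto)
    moreover have "(\<Sum>t\<in>{s, p}. e t) = e s + e p" "(\<Sum>t\<in>{s', q}. e t) = e s' + e q"
      using that by auto
    ultimately show ?thesis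
      using gap by simp
  qed simp
  then show ?thesis
    using pq by (meson order_antisym)
qed

lemma signed_indicator_if_additive_unit_range:
  fixes e :: "'a \<Rightarrow> int"
  assumes X: "finite X" and r: "3 \<le> r" and big: "2 * r + 1 \<le> card X"
    and range: "\<And>B. B \<in> ksubsets X r \<Longrightarrow> \<bar>\<gamma> + (\<Sum>t\<in>B. e t)\<bar> \<le> 1"
    and balanced: "int (card X) * \<gamma> + int r * (\<Sum>t\<in>X. e t) = 0"
    and B0: "B0 \<in> ksubsets X r" "\<gamma> + (\<Sum>t\<in>B0. e t) \<noteq> 0"
  obtains p q where "p \<in> X" "q \<in> X" "p \<noteq> q"
    "\<And>B. B \<in> ksubsets X r \<Longrightarrow> \<gamma> + (\<Sum>t\<in>B. e t) = of_bool (p \<in> B) - of_bool (q \<in> B)"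
proof -
  have ne: "X \<noteq> {}" "e ` X \<noteq> {}"
    using big by auto
  obtain s where s: "s \<in> X" "e s = Max (e ` X)"
    using Max_in[OF finite_imageI[OF X] ne(2)] by auto
  obtain s' where s': "s' \<in> X" "e s' = Min (e ` X)"
    using Min_in[OF finite_imageI[OF X] ne(2)] by auto
  have bounds: "e s' \<le> e t" "e t \<le> e s" if "t \<in> X" for t
    using s s' that X by simp_all
  show thesis
  proof (cases "e s = e s'")
    case True
    then have "e t = e s'" if "t \<in> X" for t
      using bounds[OF that] by simp
    then show thesis
      using additive_constant_vanishes[OF X ne(1) balanced _ B0(1)] B0(2) by blast
  next
    case False
    then have "s \<noteq> s'" "e s' < e s"
      using bounds[OF s(1)] by auto
    moreover have "(\<Sum>t\<in>{s}. e t) - (\<Sum>t\<in>{s'}. e t) \<le> 2"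
      using additive_exchange_bound[where X = X and r = r and \<gamma> = \<gamma> and e = e and k = 1
          and P = "{s}" and Q = "{s'}"]
        X range s s' \<open>s \<noteq> s'\<close> r big
      by simp
    ultimately consider "e s = e s' + 1" | "e s = e s' + 2"
      by fastforce
    then show thesis
    proof cases
      case 1
      define S where "S = {t \<in> X. e t = e s}"
      have "s \<in> S" "s' \<notin> S"
        using s(1) 1 unfolding S_def by auto
      then have "S \<subseteq> X" "S \<noteq> {}" "S \<noteq> X"
        using s'(1) unfolding S_def by auto
      moreover have "e t = e s' + of_bool (t \<in> S)" if "t \<in> X" for t
        using bounds[OF that] 1 that unfolding S_def by auto
      ultimately show thesis
        using additive_two_level_impossible[OF X r big range balanced] by blast
    next
      case 2
      have "X - {s, s'} \<noteq> {}"
      proof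
        assume "X - {s, s'} = {}"
        then have "card X \<le> card {s, s'}"
          by (intro card_mono) auto
        also have "\<dots> \<le> 2"
          by (simp add: card_insert_if)
        finally show False
          using big r by simp
      qed
      then obtain p0 where p0: "p0 \<in> X - {s, s'}"
        by blast
      have "e t = e p0" if "t \<in> X - {s, s'}" for t
        using additive_gap_two_middle_const[where r = r, OF X _ _ range s(1) s'(1) \<open>s \<noteq> s'\<close> 2 that p0] r big
        by simp
      then show thesis
        using that[OF s(1) s'(1) \<open>s \<noteq> s'\<close>] 2
          additive_three_level_signed_indicator[OF X _ big range balanced s(1) s'(1) \<open>s \<noteq> s'\<close>]
          r by simp
    qed
  qed
qed

section \<open>Twins and quads\<close>

locale johnson_switching =
  fixes X :: "'a set" and w :: nat and f :: "'a set \<Rightarrow> int"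
  assumes finite_X: "finite X" and w_ge: "4 \<le> w" and card_X_ge: "w + 4 \<le> card X"
    and indicator: "\<And>A. f A = 0 \<or> f A = 1"
    and dichotomy: "\<And>a b. a \<in> X \<Longrightarrow> b \<in> X \<Longrightarrow> a \<noteq> b \<Longrightarrow>
      (\<forall>B\<in>ksubsets (X - {a, b}) (w - 1). f (insert a B) = f (insert b B)) \<or>
      (\<exists>p q. p \<in> X - {a, b} \<and> q \<in> X - {a, b} \<and> p \<noteq> q \<and>
        (\<forall>B\<in>ksubsets (X - {a, b}) (w - 1).
          f (insert a B) - f (insert b B) = of_bool (p \<in> B) - of_bool (q \<in> B)))"
begin

definition twins :: "'a \<Rightarrow> 'a \<Rightarrow> bool" where
  "twins a b \<longleftrightarrow> (\<forall>B\<in>ksubsets (X - {a, b}) (w - 1). f (insert a B) = f (insert b B))"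

definition quad :: "'a \<Rightarrow> 'a \<Rightarrow> 'a \<Rightarrow> 'a \<Rightarrow> bool" where
  "quad a b p q \<longleftrightarrow> a \<in> X \<and> b \<in> X \<and> p \<in> X \<and> q \<in> X \<and> distinct [a, b, p, q] \<and>
    (\<forall>C\<in>ksubsets (X - {a, b, p, q}) (w - 2).
      f (insert a (insert p C)) = 1 \<and> f (insert b (insert q C)) = 1 \<and>
      f (insert b (insert p C)) = 0 \<and> f (insert a (insert q C)) = 0)"

lemma quad_distinct:
  "quad a b p q \<Longrightarrow> a \<in> X \<and> b \<in> X \<and> p \<in> X \<and> q \<in> X \<and> distinct [a, b, p, q]"
  by (simp add: quad_def)

lemma quadD:
  assumes "quad a b p q" "C \<in> ksubsets (X - {a, b, p, q}) (w - 2)"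
  shows "f (insert a (insert p C)) = 1" "f (insert b (insert q C)) = 1"
    "f (insert b (insert p C)) = 0" "f (insert a (insert q C)) = 0"
  using assms unfolding quad_def by blast+

lemma quad_swap: "quad a b p q \<Longrightarrow> quad b a q p"
  unfolding quad_def by (auto simp: insert_commute)

lemma quad_flip: "quad a b p q \<Longrightarrow> quad p q a b"
  unfolding quad_def by (auto simp: insert_commute)

lemma quad_if_signed_pair:
  assumes ab: "a \<in> X" "b \<in> X" "a \<noteq> b" and pq: "p \<in> X - {a, b}" "q \<in> X - {a, b}" "p \<noteq> q"
    and signed: "\<forall>B\<in>ksubsets (X - {a, b}) (w - 1).
      f (insert a B) - f (insert b B) = of_bool (p \<in> B) - of_bool (q \<in> B)"
  shows "quad a b p q"
  unfolding quad_def
proof (intro conjI ballI)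
  show "a \<in> X" "b \<in> X" "p \<in> X" "q \<in> X" "distinct [a, b, p, q]"
    using ab pq by auto
  fix C
  assume C: "C \<in> ksubsets (X - {a, b, p, q}) (w - 2)"
  then have "finite C" "p \<notin> C" "q \<notin> C"
    using finite_X finite_subset by auto
  then have "insert p C \<in> ksubsets (X - {a, b}) (w - 1)" "insert q C \<in> ksubsets (X - {a, b}) (w - 1)"
    using C pq w_ge by auto
  then have "f (insert a (insert p C)) - f (insert b (insert p C)) = 1"
    "f (insert a (insert q C)) - f (insert b (insert q C)) = -1"
    using signed \<open>p \<noteq> q\<close> \<open>p \<notin> C\<close> \<open>q \<notin> C\<close> by auto
  then show "f (insert a (insert p C)) = 1" "f (insert b (insert q C)) = 1"
    "f (insert b (insert p C)) = 0" "f (insert a (insert q C)) = 0"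
    using indicator[of "insert a (insert p C)"] indicator[of "insert b (insert p C)"]
      indicator[of "insert a (insert q C)"] indicator[of "insert b (insert q C)"]
    by auto
qed

lemma quad_if_not_twins:
  assumes "a \<in> X" "b \<in> X" "a \<noteq> b" "\<not> twins a b"
  obtains p q where "p \<in> X - {a, b}" "q \<in> X - {a, b}" "quad a b p q"
    "\<forall>B\<in>ksubsets (X - {a, b}) (w - 1).
      f (insert a B) - f (insert b B) = of_bool (p \<in> B) - of_bool (q \<in> B)"
  using dichotomy[OF assms(1-3)] assms(4) quad_if_signed_pair[OF assms(1-3)] that
  unfolding twins_def by blast

lemma no_disjoint_quads:
  assumes Q1: "quad a b p q" and Q2: "quad a' b' p' q'"
    and disj: "{a, b, p, q} \<inter> {a', b', p', q'} = {}"
  shows False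
proof -
  note q1 = quad_distinct[OF Q1] and q2 = quad_distinct[OF Q2]
  have "w - 4 + length [a, b, p, q, a', b', p', q'] \<le> card X"
    using w_ge card_X_ge by simp
  then obtain D where D: "D \<subseteq> X - set [a, b, p, q, a', b', p', q']" "card D = w - 4" "finite D"
    by (rule obtain_subset_avoiding_list)
  have "a' \<notin> D" "p' \<notin> D" "b \<notin> D" "p \<notin> D" "a' \<noteq> p'" "b \<noteq> p"
    using D(1) q1 q2 by auto
  then have "card (insert a' (insert p' D)) = w - 2" "card (insert b (insert p D)) = w - 2"
    using D(2,3) w_ge by simp_all
  then have "insert a' (insert p' D) \<in> ksubsets (X - {a, b, p, q}) (w - 2)"
    and "insert b (insert p D) \<in> ksubsets (X - {a', b', p', q'}) (w - 2)"
    using D(1) q1 q2 disj by auto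
  then have "f (insert b (insert p (insert a' (insert p' D)))) = 0"
    and "f (insert a' (insert p' (insert b (insert p D)))) = 1"
    using quadD[OF Q1] quadD[OF Q2] by blast+
  moreover have "insert b (insert p (insert a' (insert p' D))) = insert a' (insert p' (insert b (insert p D)))"
    by blast
  ultimately show False
    by simp
qed

lemma no_quads_sharing_corner:
  assumes Q1: "quad i j k l" and Q2: "quad t u i q"
    and tu: "t \<notin> {i, j, k, l}" "u \<notin> {i, j, k, l}"
  shows False
proof -
  note q1 = quad_distinct[OF Q1] and q2 = quad_distinct[OF Q2]
  have "w - 3 + length [i, j, k, l, t, u, q] \<le> card X"
    using w_ge card_X_ge by simp
  then obtain D where D: "D \<subseteq> X - set [i, j, k, l, t, u, q]" "card D = w - 3" "finite D"
    by (rule obtain_subset_avoiding_list)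
  have card_D: "card (insert x D) = w - 2" if "x \<notin> D" for x
    using that D(2,3) w_ge by simp
  have "insert u D \<in> ksubsets (X - {i, j, k, l}) (w - 2)"
    using D(1) card_D[of u] q2 tu by auto
  show False
  proof (cases "q = k")
    case False
    have "insert k D \<in> ksubsets (X - {t, u, i, q}) (w - 2)"
      using D(1) card_D[of k] q1 tu False by auto
    then have "f (insert u (insert i (insert k D))) = 0"
      using quadD(3)[OF Q2] by blast
    moreover have "f (insert i (insert k (insert u D))) = 1"
      using quadD(1)[OF Q1 \<open>insert u D \<in> _\<close>] .
    moreover have "insert u (insert i (insert k D)) = insert i (insert k (insert u D))"
      by blast
    ultimately show False
      by simp
  next
    case True
    have "insert j D \<in> ksubsets (X - {t, u, i, q}) (w - 2)"
      using D(1) card_D[of j] q1 tu True by auto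
    then have "f (insert u (insert q (insert j D))) = 1"
      using quadD(2)[OF Q2] by blast
    moreover have "f (insert j (insert k (insert u D))) = 0"
      using quadD(3)[OF Q1 \<open>insert u D \<in> _\<close>] .
    moreover have "insert u (insert q (insert j D)) = insert j (insert k (insert u D))"
      using True by blast
    ultimately show False
      by simp
  qed
qed

lemma no_quad_on_outside_pair:
  assumes Q1: "quad i j k l" and Q2: "quad t u p q"
    and tu: "t \<notin> {i, j, k, l}" "u \<notin> {i, j, k, l}"
  shows False
proof -
  have shared: False
    if Q: "quad t' u' p' q'" and p': "p' \<in> {i, j, k, l}" and tu': "t' \<notin> {i, j, k, l}" "u' \<notin> {i, j, k, l}"
    for t' u' p' q'
  proof -
    consider "p' = i" | "p' = j" | "p' = k" | "p' = l"
      using p' by blast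
    then show False
    proof cases
      case 1
      then show False using no_quads_sharing_corner[OF Q1] Q tu' by simp
    next
      case 2
      then show False using no_quads_sharing_corner[OF quad_swap[OF Q1]] Q tu' by auto
    next
      case 3
      then show False using no_quads_sharing_corner[OF quad_flip[OF Q1]] Q tu' by auto
    next
      case 4
      then show False using no_quads_sharing_corner[OF quad_swap[OF quad_flip[OF Q1]]] Q tu' by auto
    qed
  qed
  show False
  proof (cases "p \<in> {i, j, k, l} \<or> q \<in> {i, j, k, l}")
    case True
    then show False
      using shared[OF Q2 _ tu] shared[OF quad_swap[OF Q2] _ tu(2,1)] by blast
  next
    case False
    then show False
      using no_disjoint_quads[OF Q1 Q2] tu by auto
  qed
qed

lemma signed_pair_not_twins:
  assumes xt: "x \<in> X" "t \<in> X" "x \<noteq> t" and pq: "p \<in> X - {x, t}" "q \<in> X - {x, t}" "p \<noteq> q"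
    and signed: "\<forall>B\<in>ksubsets (X - {x, t}) (w - 1).
      f (insert x B) - f (insert t B) = of_bool (p \<in> B) - of_bool (q \<in> B)"
    and z: "z \<in> {p, q}" and z': "z' \<in> X - {x, t, p, q}"
  shows "\<not> twins z z'"
proof
  assume tw: "twins z z'"
  have "w - 2 + length [x, t, p, q, z'] \<le> card X"
    using w_ge card_X_ge by simp
  then obtain C where C: "C \<subseteq> X - set [x, t, p, q, z']" "card C = w - 2" "finite C"
    by (rule obtain_subset_avoiding_list)
  have card_C: "card (insert y C) = w - 1" if "y \<notin> C" for y
    using that C(2,3) w_ge by simp
  have "x \<notin> C" "t \<notin> C" "z \<notin> C" "z' \<notin> C" "z \<noteq> z'"
    using C(1) z z' by auto
  then have "insert x C \<in> ksubsets (X - {z, z'}) (w - 1)" "insert t C \<in> ksubsets (X - {z, z'}) (w - 1)"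
    using C(1) xt z z' pq card_C by auto
  then have "f (insert z (insert x C)) = f (insert z' (insert x C))"
    "f (insert z (insert t C)) = f (insert z' (insert t C))"
    using tw unfolding twins_def by blast+
  then have "f (insert x (insert z C)) - f (insert t (insert z C))
      = f (insert x (insert z' C)) - f (insert t (insert z' C))"
    by (simp add: insert_commute)
  moreover have "insert z C \<in> ksubsets (X - {x, t}) (w - 1)" "insert z' C \<in> ksubsets (X - {x, t}) (w - 1)"
    using C(1) z z' pq card_C \<open>z \<notin> C\<close> \<open>z' \<notin> C\<close> by auto
  moreover have "p \<notin> C" "q \<notin> C" "z' \<noteq> p" "z' \<noteq> q"
    using C(1) z' by auto
  ultimately show False
    using signed z pq(3) by auto
qed

context
  fixes i j k l
  assumes Q: "quad i j k l"
    and twins_outside: "\<And>t u. t \<in> X - {i, j, k, l} \<Longrightarrow> u \<in> X - {i, j, k, l} \<Longrightarrow> t \<noteq> u \<Longrightarrow> twins t u"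
begin

lemma card_outside_quad: "card (X - {i, j, k, l}) = card X - 4"
proof -
  have "card (X - {i, j, k, l}) = card X - card {i, j, k, l}"
    using quad_distinct[OF Q] finite_X by (intro card_Diff_subset) auto
  then show ?thesis
    using quad_distinct[OF Q] by simp
qed

lemma signed_pair_inside_quad:
  assumes x: "x \<in> {i, j, k, l}" and t: "t \<in> X - {i, j, k, l}" and nt: "\<not> twins x t"
  obtains p q where "p \<in> {i, j, k, l}" "q \<in> {i, j, k, l}" "quad x t p q"
    "\<forall>B\<in>ksubsets (X - {x, t}) (w - 1).
      f (insert x B) - f (insert t B) = of_bool (p \<in> B) - of_bool (q \<in> B)"
proof -
  have xt: "x \<in> X" "t \<in> X" "x \<noteq> t"
    using x t quad_distinct[OF Q] by auto
  obtain p q where pq: "p \<in> X - {x, t}" "q \<in> X - {x, t}" "quad x t p q"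
    and signed: "\<forall>B\<in>ksubsets (X - {x, t}) (w - 1).
      f (insert x B) - f (insert t B) = of_bool (p \<in> B) - of_bool (q \<in> B)"
    using quad_if_not_twins[OF xt nt] by blast
  have inside: "z \<in> {i, j, k, l}" if z: "z \<in> {p, q}" for z
  proof (rule ccontr)
    assume "z \<notin> {i, j, k, l}"
    have "card {t, p, q} \<le> 3"
      by (simp add: card_insert_le_m1)
    then have "card (X - {i, j, k, l}) - card {t, p, q} > 0"
      using card_outside_quad w_ge card_X_ge by linarith
    then have "card (X - {i, j, k, l} - {t, p, q}) > 0"
      using diff_card_le_card_Diff[of "{t, p, q}" "X - {i, j, k, l}"] by simp
    then have "X - {i, j, k, l} - {t, p, q} \<noteq> {}"
      by (intro notI) simp
    then obtain z' where z': "z' \<in> X - {i, j, k, l} - {t, p, q}"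
      by blast
    have "z' \<noteq> x" "z \<noteq> z'" "z \<in> X - {i, j, k, l}"
      using x z z' pq \<open>z \<notin> {i, j, k, l}\<close> by auto
    then have "twins z z'"
      using twins_outside z' by blast
    moreover have "\<not> twins z z'"
      using signed_pair_not_twins[OF xt pq(1,2) _ signed z] z' \<open>z' \<noteq> x\<close> pq(3) quad_distinct
      by auto
    ultimately show False
      by blast
  qed
  have "p \<in> {i, j, k, l}" "q \<in> {i, j, k, l}"
    using inside by blast+
  then show thesis
    using pq(3) signed by (rule that)
qed

lemma swap_into_outside:
  assumes x: "x \<in> {i, j, k, l}" and t: "t \<in> X - {i, j, k, l}"
    and B: "B \<in> ksubsets (X - {i, j, k, l} - {t}) (w - 1)"
  shows "f (insert x B) = f (insert t B)"
proof -
  have B': "B \<in> ksubsets (X - {x, t}) (w - 1)"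
    using B x by auto
  show ?thesis
  proof (cases "twins x t")
    case True
    then show ?thesis
      using B' unfolding twins_def by blast
  next
    case False
    then obtain p q where "p \<in> {i, j, k, l}" "q \<in> {i, j, k, l}" "quad x t p q"
      and signed: "\<forall>B\<in>ksubsets (X - {x, t}) (w - 1).
        f (insert x B) - f (insert t B) = of_bool (p \<in> B) - of_bool (q \<in> B)"
      by (rule signed_pair_inside_quad[OF x t])
    moreover have "p \<notin> B" "q \<notin> B"
      using B calculation(1,2) by auto
    ultimately show ?thesis
      using B' by fastforce
  qed
qed

lemma swap_inside_quad:
  assumes xy: "x \<in> {i, j, k, l}" "y \<in> {i, j, k, l}" and B: "B \<in> ksubsets (X - {i, j, k, l}) (w - 1)"
  shows "f (insert x B) = f (insert y B)"
proof -
  have "card (X - {i, j, k, l}) - card B > 0"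
    using B card_outside_quad w_ge card_X_ge by auto
  then have "card (X - {i, j, k, l} - B) > 0"
    using diff_card_le_card_Diff[of B "X - {i, j, k, l}"] B finite_X finite_subset
    by (metis finite_Diff less_le_trans mem_ksubsets_iff)
  then obtain t where t: "t \<in> X - {i, j, k, l}" "t \<notin> B"
    by (metis Diff_iff card_gt_0_iff ex_in_conv)
  then have "B \<in> ksubsets (X - {i, j, k, l} - {t}) (w - 1)"
    using B by auto
  then show ?thesis
    using swap_into_outside[OF xy(1) t(1)] swap_into_outside[OF xy(2) t(1)] by simp
qed

lemma twins_across_quad:
  assumes x: "x \<in> {i, j, k, l}" and t: "t \<in> X - {i, j, k, l}"
  shows "twins x t"
proof (rule ccontr)
  assume "\<not> twins x t"
  then obtain p q where pq: "p \<in> {i, j, k, l}" "q \<in> {i, j, k, l}" and Qx: "quad x t p q"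
    and "\<forall>B\<in>ksubsets (X - {x, t}) (w - 1).
      f (insert x B) - f (insert t B) = of_bool (p \<in> B) - of_bool (q \<in> B)"
    by (rule signed_pair_inside_quad[OF x t])
  have "w - 2 + length [i, j, k, l, t] \<le> card X"
    using w_ge card_X_ge by simp
  then obtain C where C: "C \<subseteq> X - set [i, j, k, l, t]" "card C = w - 2" "finite C"
    by (rule obtain_subset_avoiding_list)
  have "{x, t, p, q} \<subseteq> set [i, j, k, l, t]"
    using x pq by auto
  then have "C \<subseteq> X - {x, t, p, q}"
    using C(1) by blast
  then have "C \<in> ksubsets (X - {x, t, p, q}) (w - 2)"
    using C(2) by simp
  then have "f (insert t (insert q C)) = 1" "f (insert t (insert p C)) = 0"
    using quadD(2,3)[OF Qx] by blast+
  moreover have "t \<notin> C"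
    using C(1) by auto
  then have "insert t C \<in> ksubsets (X - {i, j, k, l}) (w - 1)"
    using C t w_ge by auto
  then have "f (insert q (insert t C)) = f (insert p (insert t C))"
    using swap_inside_quad[OF pq(2,1)] by blast
  ultimately show False
    by (simp add: insert_commute)
qed

lemma no_quad_with_twin_complement: False
proof -
  have "w - 2 + length [i, j, k, l] \<le> card X"
    using w_ge card_X_ge by simp
  then obtain C where C: "C \<subseteq> X - set [i, j, k, l]" "card C = w - 2" "finite C"
    by (rule obtain_subset_avoiding_list)
  have "card (X - {i, j, k, l}) > card C"
    using C(2) card_outside_quad w_ge card_X_ge by simp
  then have "\<not> X - {i, j, k, l} \<subseteq> C"
    using card_mono[OF C(3)] by (meson not_le)
  then obtain t where t: "t \<in> X - {i, j, k, l}" "t \<notin> C"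
    by blast
  have "C \<in> ksubsets (X - {i, j, k, l}) (w - 2)"
    using C by simp
  then have "f (insert i (insert k C)) = 1" "f (insert j (insert k C)) = 0"
    using quadD(1,3)[OF Q] by blast+
  moreover have "k \<notin> C" "t \<noteq> k" "k \<in> X"
    using C t quad_distinct[OF Q] by auto
  then have "insert k C \<in> ksubsets (X - {i, t}) (w - 1)" "insert k C \<in> ksubsets (X - {j, t}) (w - 1)"
    using C t quad_distinct[OF Q] w_ge by auto
  then have "f (insert i (insert k C)) = f (insert t (insert k C))"
    "f (insert j (insert k C)) = f (insert t (insert k C))"
    using twins_across_quad[of i t] twins_across_quad[of j t] t unfolding twins_def by auto
  ultimately show False
    by simp
qed

end

lemma twins_all:
  assumes ab: "a \<in> X" "b \<in> X" "a \<noteq> b"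
  shows "twins a b"
proof (rule ccontr)
  assume "\<not> twins a b"
  then obtain p q where "p \<in> X - {a, b}" "q \<in> X - {a, b}" and Q: "quad a b p q"
    and "\<forall>B\<in>ksubsets (X - {a, b}) (w - 1).
      f (insert a B) - f (insert b B) = of_bool (p \<in> B) - of_bool (q \<in> B)"
    by (rule quad_if_not_twins[OF ab])
  show False
  proof (cases "\<exists>t\<in>X - {a, b, p, q}. \<exists>u\<in>X - {a, b, p, q}. t \<noteq> u \<and> \<not> twins t u")
    case True
    then obtain t u where tu: "t \<in> X - {a, b, p, q}" "u \<in> X - {a, b, p, q}" "t \<noteq> u" "\<not> twins t u"
      by blast
    have "t \<in> X" "u \<in> X"
      using tu(1,2) by auto
    then obtain p' q' where "p' \<in> X - {t, u}" "q' \<in> X - {t, u}" and Q': "quad t u p' q'"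
      and "\<forall>B\<in>ksubsets (X - {t, u}) (w - 1).
        f (insert t B) - f (insert u B) = of_bool (p' \<in> B) - of_bool (q' \<in> B)"
      using tu(3,4) by (rule quad_if_not_twins)
    then show False
      using no_quad_on_outside_pair[OF Q Q'] tu by blast
  next
    case False
    then show False
      using no_quad_with_twin_complement[OF Q] by blast
  qed
qed

lemma constant_on_ksubsets:
  assumes "A \<in> ksubsets X w" "B \<in> ksubsets X w"
  shows "f A = f B"
proof (rule ksubsets_exchange_induct[OF finite_X assms])
  fix C c d
  assume C: "C \<in> ksubsets X w" and cd: "c \<in> C" "d \<in> X - C" and "f A = f C"
  have "C - {c} \<in> ksubsets (X - {d, c}) (w - 1)"
    using C cd finite_X finite_subset by auto
  moreover have "d \<in> X" "c \<in> X" "d \<noteq> c"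
    using C cd by auto
  ultimately have "f (insert d (C - {c})) = f (insert c (C - {c}))"
    using twins_all unfolding twins_def by blast
  then show "f A = f (insert d (C - {c}))"
    using \<open>f A = f C\<close> cd(1) by (simp add: insert_absorb)
qed simp

end

section \<open>Indicators satisfying the second eigenvalue equation\<close>

locale johnson_eigen_indicator =
  fixes X :: "'a set" and w :: nat and f :: "'a set \<Rightarrow> int" and \<theta> \<kappa> :: int
  assumes finite_X: "finite X" and w_ge: "4 \<le> w" and card_X_ge: "2 * w + 1 \<le> card X"
    and indicator: "\<And>A. f A = 0 \<or> f A = 1"
    and theta: "\<theta> = int (w * (card X - w)) - 2 * int (card X) + 2"
    and eigen: "\<And>A. A \<in> ksubsets X w \<Longrightarrow> (\<Sum>Y\<in>johnson_nbhd X w A. f Y) = \<theta> * f A + \<kappa>"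
begin

lemma card_Diff_pair: "a \<in> X \<Longrightarrow> b \<in> X \<Longrightarrow> a \<noteq> b \<Longrightarrow> card (X - {a, b}) = card X - 2"
  using finite_X by (subst card_Diff_subset) auto

lemma swap_diff_eigen:
  assumes "a \<in> X" "b \<in> X" "a \<noteq> b" "B \<in> ksubsets (X - {a, b}) (w - 1)"
  shows "(\<Sum>Y\<in>johnson_nbhd (X - {a, b}) (w - 1) B. f (insert a Y) - f (insert b Y))
    = (\<theta> + 1) * (f (insert a B) - f (insert b B))"
  using johnson_swap_diff_eigen[OF finite_X assms(1-3) _ eigen assms(4)] w_ge by simp

lemma swap_diff_sum_zero:
  assumes "a \<in> X" "b \<in> X" "a \<noteq> b"
  shows "(\<Sum>B\<in>ksubsets (X - {a, b}) (w - 1). f (insert a B) - f (insert b B)) = 0"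
proof (rule johnson_eigen_sum_zero)
  show "finite (X - {a, b})" "1 \<le> w - 1"
    using finite_X w_ge by auto
  show "\<And>B. B \<in> ksubsets (X - {a, b}) (w - 1) \<Longrightarrow>
      (\<Sum>Y\<in>johnson_nbhd (X - {a, b}) (w - 1) B. f (insert a Y) - f (insert b Y))
      = (\<theta> + 1) * (f (insert a B) - f (insert b B))"
    by (rule swap_diff_eigen[OF assms])
  obtain u v where "w = u + 4" "card X = 2 * w + 1 + v"
    using w_ge card_X_ge by (metis add.commute le_add_diff_inverse)
  then show "\<theta> + 1 \<noteq> int ((w - 1) * (card (X - {a, b}) - (w - 1)))"
    unfolding theta card_Diff_pair[OF assms] by (simp add: algebra_simps)
qed

lemma second_swap_diff_const:
  assumes ab: "a \<in> X" "b \<in> X" "a \<noteq> b" and cd: "c \<in> X - {a, b}" "d \<in> X - {a, b}" "c \<noteq> d"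
    and C: "C \<in> ksubsets (X - {a, b} - {c, d}) (w - 2)"
    and C': "C' \<in> ksubsets (X - {a, b} - {c, d}) (w - 2)"
  shows "(f (insert a (insert c C)) - f (insert b (insert c C)))
      - (f (insert a (insert d C)) - f (insert b (insert d C)))
    = (f (insert a (insert c C')) - f (insert b (insert c C')))
      - (f (insert a (insert d C')) - f (insert b (insert d C')))"
proof -
  define g where "g B = f (insert a B) - f (insert b B)" for B
  define Y where "Y = X - {a, b} - {c, d}"
  have card_Y: "card Y = card X - 4"
    unfolding Y_def using card_Diff_pair[OF ab] cd finite_X by (simp add: card_Diff_subset)
  have "(\<Sum>Z\<in>johnson_nbhd Y (w - 2) D. g (insert c Z) - g (insert d Z))
      = int ((w - 2) * (card Y - (w - 2))) * (g (insert c D) - g (insert d D))"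
    if "D \<in> ksubsets Y (w - 2)" for D
  proof -
    have w2: "w - 1 - 1 = w - 2"
      by simp
    have "(\<Sum>Z\<in>johnson_nbhd (X - {a, b} - {c, d}) (w - 1 - 1) D. g (insert c Z) - g (insert d Z))
        = (\<theta> + 1 + 1) * (g (insert c D) - g (insert d D))"
    proof (rule johnson_swap_diff_eigen)
      show "finite (X - {a, b})" "2 \<le> w - 1"
        using finite_X w_ge by auto
      show "\<And>A. A \<in> ksubsets (X - {a, b}) (w - 1) \<Longrightarrow>
          (\<Sum>Y\<in>johnson_nbhd (X - {a, b}) (w - 1) A. g Y) = (\<theta> + 1) * g A + 0"
        using swap_diff_eigen[OF ab] unfolding g_def by (simp add: sum_subtractf)
      show "D \<in> ksubsets (X - {a, b} - {c, d}) (w - 1 - 1)"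
        using that unfolding Y_def w2 .
    qed (use cd in auto)
    then have "(\<Sum>Z\<in>johnson_nbhd Y (w - 2) D. g (insert c Z) - g (insert d Z))
        = (\<theta> + 1 + 1) * (g (insert c D) - g (insert d D))"
      unfolding Y_def w2 .
    moreover obtain u v where "w = u + 4" "card X = 2 * w + 1 + v"
      using w_ge card_X_ge by (metis add.commute le_add_diff_inverse)
    then have "\<theta> + 1 + 1 = int ((w - 2) * (card Y - (w - 2)))"
      unfolding theta card_Y by (simp add: algebra_simps)
    ultimately show ?thesis
      by simp
  qed
  moreover have "finite Y" "1 \<le> w - 2"
    unfolding Y_def using finite_X w_ge by auto
  ultimately have "g (insert c C) - g (insert d C) = g (insert c C') - g (insert d C')"
    using johnson_eigen_degree_const C[folded Y_def] C'[folded Y_def] by blast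
  then show ?thesis
    unfolding g_def .
qed

lemma swap_diff_dichotomy:
  assumes ab: "a \<in> X" "b \<in> X" "a \<noteq> b"
  shows "(\<forall>B\<in>ksubsets (X - {a, b}) (w - 1). f (insert a B) = f (insert b B)) \<or>
    (\<exists>p q. p \<in> X - {a, b} \<and> q \<in> X - {a, b} \<and> p \<noteq> q \<and>
      (\<forall>B\<in>ksubsets (X - {a, b}) (w - 1).
        f (insert a B) - f (insert b B) = of_bool (p \<in> B) - of_bool (q \<in> B)))"
proof (cases "\<forall>B\<in>ksubsets (X - {a, b}) (w - 1). f (insert a B) = f (insert b B)")
  case False
  define Y where "Y = X - {a, b}"
  define g where "g B = f (insert a B) - f (insert b B)" for B
  from False obtain B0 where "B0 \<in> ksubsets (X - {a, b}) (w - 1)" "f (insert a B0) \<noteq> f (insert b B0)"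
    by blast
  then have B0: "B0 \<in> ksubsets Y (w - 1)" "g B0 \<noteq> 0"
    unfolding Y_def g_def by simp_all
  have Y: "finite Y" "card Y = card X - 2"
    unfolding Y_def using finite_X card_Diff_pair[OF ab] by auto
  have inv: "g (insert c C) - g (insert d C) = g (insert c C') - g (insert d C')"
    if "c \<in> Y" "d \<in> Y" "c \<noteq> d" "C \<in> ksubsets (Y - {c, d}) (w - 1 - 1)"
      "C' \<in> ksubsets (Y - {c, d}) (w - 1 - 1)" for c d C C'
    using second_swap_diff_const[OF ab, of c d C C'] that unfolding Y_def g_def by simp
  have r: "1 \<le> w - 1" "w - 1 + 2 \<le> card Y" "w - 1 \<le> card Y"
    using w_ge card_X_ge Y(2) by auto
  obtain \<gamma> e where lin: "\<And>B. B \<in> ksubsets Y (w - 1) \<Longrightarrow> g B = \<gamma> + (\<Sum>t\<in>B. e t)"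
    using additive_if_swap_diff_invariant[where G = g, OF Y(1) r(1,2) inv] by blast
  have range: "\<bar>\<gamma> + (\<Sum>t\<in>B. e t)\<bar> \<le> 1" if "B \<in> ksubsets Y (w - 1)" for B
    using lin[OF that] indicator[of "insert a B"] indicator[of "insert b B"] unfolding g_def by auto
  have "(\<Sum>B\<in>ksubsets Y (w - 1). \<gamma> + (\<Sum>t\<in>B. e t)) = (\<Sum>B\<in>ksubsets Y (w - 1). g B)"
    using lin by simp
  also have "\<dots> = 0"
    using swap_diff_sum_zero[OF ab] unfolding Y_def g_def .
  finally have "(\<Sum>B\<in>ksubsets Y (w - 1). \<gamma> + (\<Sum>t\<in>B. e t)) = 0" .
  then have "int (card Y) * \<gamma> + int (w - 1) * (\<Sum>t\<in>Y. e t) = 0"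
    by (rule balanced_if_additive_sum_zero[OF Y(1) r(1,3)])
  moreover have "\<gamma> + (\<Sum>t\<in>B0. e t) \<noteq> 0"
    using lin[OF B0(1)] B0(2) by simp
  moreover have "3 \<le> w - 1" "2 * (w - 1) + 1 \<le> card Y"
    using w_ge card_X_ge Y(2) by auto
  ultimately obtain p q where "p \<in> Y" "q \<in> Y" "p \<noteq> q"
    "\<And>B. B \<in> ksubsets Y (w - 1) \<Longrightarrow> \<gamma> + (\<Sum>t\<in>B. e t) = of_bool (p \<in> B) - of_bool (q \<in> B)"
    using signed_indicator_if_additive_unit_range[OF Y(1) _ _ range _ B0(1)] by metis
  then show ?thesis
    using lin unfolding Y_def g_def by auto
qed simp

end

sublocale johnson_eigen_indicator \<subseteq> johnson_switching X w f
  using finite_X w_ge card_X_ge indicator swap_diff_dichotomy by unfold_locales auto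

section \<open>Equitable partitions\<close>

lemma johnson_vertices_eq_ksubsets: "johnson_vertices n w = ksubsets {0..<n} w"
  by (simp add: johnson_vertices_def ksubsets_def)

lemma equitable_2partition_indicator_eigen:
  assumes eq: "equitable_2partition n w C1 C2 S" and A: "A \<in> ksubsets {0..<n} w"
  shows "(\<Sum>Y\<in>johnson_nbhd {0..<n} w A. of_bool (Y \<in> C1))
    = (S 1 1 - S 2 1) * of_bool (A \<in> C1) + S 2 1"
proof -
  have cells: "C1 \<inter> C2 = {}" "C1 \<union> C2 = ksubsets {0..<n} w"
    using eq by (simp_all add: equitable_2partition_def johnson_vertices_eq_ksubsets)
  have count: "int (card {Y \<in> C1. johnson_adj w A Y}) = (if A \<in> C1 then S 1 1 else S 2 1)"
    using eq A cells unfolding equitable_2partition_def by (cases "A \<in> C1") auto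
  have "C1 \<subseteq> ksubsets {0..<n} w"
    using cells(2) by blast
  then have "johnson_nbhd {0..<n} w A \<inter> {Y. Y \<in> C1} = {Y \<in> C1. johnson_adj w A Y}"
    by (auto simp: johnson_nbhd_def johnson_adj_def subset_iff)
  then have "(\<Sum>Y\<in>johnson_nbhd {0..<n} w A. of_bool (Y \<in> C1)) = int (card {Y \<in> C1. johnson_adj w A Y})"
    by (simp add: finite_johnson_nbhd)
  then show ?thesis
    using count by simp
qed

lemma no_equitable_2partition_second_eigenvalue:
  assumes w: "4 \<le> w" and n: "2 * w + 1 \<le> n"
    and eq: "equitable_2partition n w C1 C2 S"
    and eigenvalue: "S 1 1 - S 2 1 = int (w * (n - w)) - 2 * int n + 2"
  shows False
proof -
  interpret johnson_eigen_indicator "{0..<n}" w "\<lambda>A. of_bool (A \<in> C1)" "S 1 1 - S 2 1" "S 2 1"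
    using w n eigenvalue equitable_2partition_indicator_eigen[OF eq] by unfold_locales auto
  obtain A B where "A \<in> C1" "B \<in> C2" "C1 \<inter> C2 = {}" "C1 \<union> C2 = ksubsets {0..<n} w"
    using eq by (auto simp: equitable_2partition_def johnson_vertices_eq_ksubsets)
  then have "A \<in> C1" "B \<notin> C1" "A \<in> ksubsets {0..<n} w" "B \<in> ksubsets {0..<n} w"
    by blast+
  then show False
    using constant_on_ksubsets[of A B] by simp
qed

theorem theorem2:
  fixes n w b :: nat
  assumes "w > 3" and "n > 2 * w" and "n - 1 \<le> b" and "b \<le> 2 * n - 1"
  shows "\<not> (\<exists>C1 C2. equitable_2partition n w C1 C2
            (\<lambda>i j. if i = 1 then (if j = 1 then int (w * (n - w)) - int b else int b)
                   else (if j = 1 then 2 * int n - 2 - int b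
                         else int (w * (n - w)) - 2 * int n + 2 + int b)))"
  using assms by (auto elim!: no_equitable_2partition_second_eigenvalue[rotated 2])

end
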